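(* Let $E$ be an Archimedean vector lattice and suppose $(J_n)_{n\in\mathbb N}$ are uniformly closed ideals of $E$ such that the quotient vector lattice $E/J_n$ has the countable sup property for each $n$. If $\bigcap_{n=1}^\infty J_n=\{0\}$, then $E$ has the countable sup property.
   Context: An ideal $J$ of $E$ is uniformly closed if it is closed under relatively uniform limits (limits $x_k\to x$ for which there is $u\ge0$ and $\varepsilon_k\to0$ with $|x_k-x|\le\varepsilon_k u$). A vector lattice has the countable sup property if every nonempty subset possessing a supremum contains a countable subset with the same supremum. *)

theory Defs
  imports "HOL-Analysis.Analysis"
begin

definition vabs :: "'a::{ordered_real_vector, lattice} \<Rightarrow> 'a" where
  "vabs x = sup x (- x)"

definition archimedean_vl :: "'a::{ordered_real_vector, lattice} itself \<Rightarrow> bool" where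
  "archimedean_vl _ \<longleftrightarrow>
     (\<forall>x y :: 'a. 0 \<le> x \<longrightarrow> (\<forall>n::nat. of_nat n *\<^sub>R x \<le> y) \<longrightarrow> x = 0)"

definition vl_ideal :: "'a::{ordered_real_vector, lattice} set \<Rightarrow> bool" where
  "vl_ideal J \<longleftrightarrow> 0 \<in> J \<and> (\<forall>x\<in>J. \<forall>y\<in>J. x + y \<in> J) \<and>
     (\<forall>c x. x \<in> J \<longrightarrow> c *\<^sub>R x \<in> J) \<and>
     (\<forall>x\<in>J. \<forall>y. vabs y \<le> vabs x \<longrightarrow> y \<in> J)"

definition uniformly_closed :: "'a::{ordered_real_vector, lattice} set \<Rightarrow> bool" where
  "uniformly_closed J \<longleftrightarrow>
     (\<forall>(xs::nat \<Rightarrow> 'a) x u (eps::nat \<Rightarrow> real).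
        (\<forall>k. xs k \<in> J) \<and> 0 \<le> u \<and> eps \<longlonglongrightarrow> 0 \<and>
        (\<forall>k. vabs (xs k - x) \<le> eps k *\<^sub>R u) \<longrightarrow> x \<in> J)"

definition is_sup_wrt :: "('a \<Rightarrow> 'a \<Rightarrow> bool) \<Rightarrow> 'a set \<Rightarrow> 'a \<Rightarrow> bool" where
  "is_sup_wrt le A s \<longleftrightarrow> (\<forall>a\<in>A. le a s) \<and> (\<forall>u. (\<forall>a\<in>A. le a u) \<longrightarrow> le s u)"

definition countable_sup_property_wrt :: "('a \<Rightarrow> 'a \<Rightarrow> bool) \<Rightarrow> bool" where
  "countable_sup_property_wrt le \<longleftrightarrow>
     (\<forall>A s. A \<noteq> {} \<and> is_sup_wrt le A s \<longrightarrow>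
        (\<exists>B. B \<subseteq> A \<and> countable B \<and> is_sup_wrt le B s))"

definition countable_sup_property :: "'a::{ordered_real_vector, lattice} itself \<Rightarrow> bool" where
  "countable_sup_property _ \<longleftrightarrow> countable_sup_property_wrt ((\<le>) :: 'a \<Rightarrow> 'a \<Rightarrow> bool)"

text \<open>Order of the quotient vector lattice E/J, expressed on representatives:
  [x] \<le> [y] iff x \<le> y + j for some j in J.\<close>
definition quot_le :: "'a::{ordered_real_vector, lattice} set \<Rightarrow> 'a \<Rightarrow> 'a \<Rightarrow> bool" where
  "quot_le J x y \<longleftrightarrow> (\<exists>j\<in>J. x \<le> y + j)"

text \<open>E/J has the countable sup property (subsets of E/J represented by sets of
  representatives; suprema are taken in the quotient order).\<close>
definition quotient_countable_sup_property :: "'a::{ordered_real_vector, lattice} set \<Rightarrow> bool" where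
  "quotient_countable_sup_property J \<longleftrightarrow> countable_sup_property_wrt (quot_le J)"

end

theory Submission
  imports Defs "HOL-Library.Lattice_Algebras"
begin

(* First, in an Archimedean vector lattice the countable sup property follows
   once every order bounded disjoint system of positive elements is countable: if s = sup A and
   d = s - a0, then for each m a maximal disjoint system below the elements (d - m(s - a))^+,
   a in A, is countable, and the countably many a it uses form a set B whose upper bounds w
   satisfy m(s - w)^+ <= d for every m, hence w >= s.
   Second, such a system M in [0,u] is countable: every x in M lies outside some J_n, and
   modulo a single J only countably many x in M survive. Indeed the truncations u \<and> kx,
   together with the elements of [0,u] disjoint from M modulo J, have supremum [u] in E/J;
   a countable subfamily has the same supremum, and a truncation u \<and> kx is disjoint from
   every element of M other than x. *)

(* Every vector lattice is a lattice-ordered group; note that this also adds the simp rules of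
   Lattice_Algebras rewriting - inf, - sup, a - inf and a - sup. *)
interpretation vl: lattice_ab_group_add "(+)" "0::'a::{ordered_real_vector, lattice}" "(-)"
  uminus "(\<le>)" "(<)" inf sup
  by unfold_locales

subsection \<open>Arithmetic in vector lattices\<close>

lemma scaleR_sup_distrib_nonneg:
  fixes a b :: "'a::{ordered_real_vector, lattice}"
  assumes "0 \<le> c"
  shows "c *\<^sub>R sup a b = sup (c *\<^sub>R a) (c *\<^sub>R b)"
proof (cases "c = 0")
  case False
  with assms have c: "0 < c" by simp
  let ?S = "sup (c *\<^sub>R a) (c *\<^sub>R b)"
  have le_iff: "c *\<^sub>R x \<le> ?S \<longleftrightarrow> x \<le> inverse c *\<^sub>R ?S" for x
    using scaleR_le_cancel_left_pos[OF c, of x "inverse c *\<^sub>R ?S"] c by simp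
  have "a \<le> inverse c *\<^sub>R ?S" "b \<le> inverse c *\<^sub>R ?S"
    by (simp_all only: le_iff[symmetric]) simp_all
  then have "c *\<^sub>R sup a b \<le> ?S"
    unfolding le_iff by (rule sup_least)
  moreover have "?S \<le> c *\<^sub>R sup a b"
    using assms by (simp add: scaleR_left_mono)
  ultimately show ?thesis by (rule antisym)
qed simp

lemma scaleR_inf_distrib_nonneg:
  fixes a b :: "'a::{ordered_real_vector, lattice}"
  assumes "0 \<le> c"
  shows "c *\<^sub>R inf a b = inf (c *\<^sub>R a) (c *\<^sub>R b)"
proof -
  have "c *\<^sub>R inf a b = c *\<^sub>R - sup (- a) (- b)"
    by (subst vl.inf_eq_neg_sup) (rule refl)
  also have "\<dots> = - sup (c *\<^sub>R - a) (c *\<^sub>R - b)"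
    using scaleR_sup_distrib_nonneg[OF assms, of "- a" "- b"] by (simp only: scaleR_minus_right)
  finally show ?thesis by simp
qed

lemma diff_inf_eq_pos_diff: "(u::'a::{ordered_real_vector, lattice}) - inf u y = sup (u - y) 0"
  by (simp add: vl.diff_inf_eq_sup vl.add_sup_distrib_left sup_commute)

lemma pos_part_add_neg_part: "sup (w::'a::{ordered_real_vector, lattice}) 0 = w + sup (- w) 0"
  by (simp add: vl.add_sup_distrib_left sup_commute)

lemma inf_pos_part_neg_part: "inf (sup (x::'a::{ordered_real_vector, lattice}) 0) (sup (- x) 0) = 0"
proof -
  let ?P = "sup x 0" and ?N = "sup (- x) 0"
  have "?P - ?N = x"
    unfolding pos_part_add_neg_part[of x] by (rule add_diff_cancel_right')
  have "?P - inf ?P ?N = sup (?P - ?N) 0"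
    by (rule diff_inf_eq_pos_diff)
  also have "\<dots> = ?P"
    using \<open>?P - ?N = x\<close> by simp
  finally show ?thesis by (metis add_cancel_right_right diff_add_cancel)
qed

lemma inf_add_le_add_inf:
  fixes a b c :: "'a::{ordered_real_vector, lattice}"
  assumes "0 \<le> a" "0 \<le> b" "0 \<le> c"
  shows "inf a (b + c) \<le> inf a b + inf a c"
proof -
  let ?p = "inf a (b + c)"
  have "?p - inf a b = sup (?p - a) (?p - b)"
    by (simp add: vl.diff_inf_eq_sup vl.add_sup_distrib_left)
  also have "\<dots> \<le> c"
  proof (rule sup_least)
    have "?p - a \<le> 0" by simp
    then show "?p - a \<le> c" using assms(3) by (rule order.trans)
    have "?p \<le> c + b" using inf_le2[of a "b + c"] by (simp only: add.commute)
    then show "?p - b \<le> c" by (simp only: diff_le_eq)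
  qed
  finally have "?p - inf a b \<le> c" .
  moreover have "?p \<le> a + inf a b"
    using assms by (simp add: add_increasing2)
  then have "?p - inf a b \<le> a"
    by (simp only: diff_le_eq)
  ultimately have "?p - inf a b \<le> inf a c" by (intro le_infI)
  then show ?thesis by (simp only: diff_le_eq add.commute)
qed

lemma inf_scaleR_le_scaleR_inf:
  fixes a b :: "'a::{ordered_real_vector, lattice}"
  assumes "0 \<le> a" "0 \<le> b" "0 \<le> c"
  shows "inf (c *\<^sub>R a) b \<le> max 1 c *\<^sub>R inf a b"
proof -
  have "inf (c *\<^sub>R a) b \<le> inf (max 1 c *\<^sub>R a) (max 1 c *\<^sub>R b)"
    using assms scaleR_right_mono[of c "max 1 c" a] scaleR_right_mono[of 1 "max 1 c" b]
    by (simp add: le_infI1 le_infI2 inf_mono)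
  also have "\<dots> = max 1 c *\<^sub>R inf a b"
    by (simp add: scaleR_inf_distrib_nonneg)
  finally show ?thesis .
qed

lemma inf_scaleR_eq_0:
  fixes a b :: "'a::{ordered_real_vector, lattice}"
  assumes "0 \<le> a" "0 \<le> b" "inf a b = 0" "0 \<le> c"
  shows "inf (c *\<^sub>R a) b = 0"
  using inf_scaleR_le_scaleR_inf[of a b c] assms
  by (simp add: antisym scaleR_nonneg_nonneg)

lemma scaleR_inf_pos_diff_le:
  fixes u x :: "'a::{ordered_real_vector, lattice}"
  assumes "0 \<le> u" "0 \<le> x" "0 \<le> c"
  shows "c *\<^sub>R inf (sup (u - c *\<^sub>R x) 0) x \<le> u"
proof -
  let ?y = "c *\<^sub>R x" and ?p = "sup (u - c *\<^sub>R x) 0"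
  have y: "0 \<le> ?y" using assms by (simp add: scaleR_nonneg_nonneg)
  have "?y = inf ?y u + sup (?y - u) 0"
    using diff_inf_eq_pos_diff[of ?y u] by (metis add.commute diff_add_cancel)
  then have "c *\<^sub>R inf ?p x = inf (c *\<^sub>R ?p) (inf ?y u + sup (?y - u) 0)"
    using assms by (simp add: scaleR_inf_distrib_nonneg)
  also have "\<dots> \<le> inf (c *\<^sub>R ?p) (inf ?y u) + inf (c *\<^sub>R ?p) (sup (?y - u) 0)"
    using assms y by (intro inf_add_le_add_inf) (auto simp: scaleR_nonneg_nonneg)
  also have "inf (c *\<^sub>R ?p) (sup (?y - u) 0) = 0"
    using inf_scaleR_eq_0[of ?p "sup (?y - u) 0" c] inf_pos_part_neg_part[of "u - ?y"] assms
    by simp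
  finally show ?thesis by (simp add: le_infI2)
qed

lemma vabs_nonneg: "0 \<le> vabs (x::'a::{ordered_real_vector, lattice})"
proof -
  have "x + - x \<le> vabs x + vabs x"
    by (intro add_mono) (simp_all add: vabs_def)
  then show ?thesis by simp
qed

lemma vabs_eq_self: "0 \<le> (x::'a::{ordered_real_vector, lattice}) \<Longrightarrow> vabs x = x"
  unfolding vabs_def by (rule sup_absorb1) (meson neg_le_0_iff_le order.trans)

subsection \<open>Ideals and the quotient order\<close>

lemma vl_ideal_zero: "vl_ideal J \<Longrightarrow> 0 \<in> J"
  unfolding vl_ideal_def by blast

lemma vl_ideal_add: "vl_ideal J \<Longrightarrow> x \<in> J \<Longrightarrow> y \<in> J \<Longrightarrow> x + y \<in> J"
  unfolding vl_ideal_def by blast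

lemma vl_ideal_scaleR: "vl_ideal J \<Longrightarrow> x \<in> J \<Longrightarrow> c *\<^sub>R x \<in> J"
  unfolding vl_ideal_def by blast

lemma vl_ideal_solid:
  assumes "vl_ideal J" "x \<in> J" "0 \<le> y" "y \<le> x"
  shows "y \<in> J"
proof -
  have "vabs y \<le> vabs x" using assms vabs_eq_self[of y] vabs_eq_self[of x] by simp
  then show ?thesis using assms unfolding vl_ideal_def by blast
qed

lemma vl_ideal_pos_part:
  assumes "vl_ideal J" "x \<in> J"
  shows "sup x 0 \<in> J"
proof -
  have "vabs (sup x 0) \<le> vabs x"
    using vabs_nonneg[of x] by (simp add: vabs_eq_self) (simp add: vabs_def)
  then show ?thesis using assms unfolding vl_ideal_def by blast
qed

lemma vl_ideal_inf_scaleR: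
  assumes "vl_ideal J" "inf z x \<in> J" "0 \<le> z" "0 \<le> x" "0 \<le> c"
  shows "inf (c *\<^sub>R z) x \<in> J"
  using vl_ideal_solid[OF assms(1) vl_ideal_scaleR[OF assms(1,2)]]
    inf_scaleR_le_scaleR_inf[of z x c] assms
  by (simp add: scaleR_nonneg_nonneg)

lemma quot_le_of_le: "vl_ideal J \<Longrightarrow> x \<le> y \<Longrightarrow> quot_le J x y"
  unfolding quot_le_def using vl_ideal_zero by (metis add_0_right)

lemma quot_le_trans:
  assumes "vl_ideal J" "quot_le J x y" "quot_le J y z"
  shows "quot_le J x z"
proof -
  obtain i j where "i \<in> J" "j \<in> J" "x \<le> y + i" "y \<le> z + j"
    using assms(2,3) unfolding quot_le_def by blast
  then have "x \<le> z + (j + i)" "j + i \<in> J"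
    using vl_ideal_add[OF assms(1)] by (auto simp: add.assoc intro: order.trans add_right_mono)
  then show ?thesis unfolding quot_le_def by blast
qed

lemma quot_le_add:
  assumes "vl_ideal J" "quot_le J x y" "quot_le J x' y'"
  shows "quot_le J (x + x') (y + y')"
proof -
  obtain i j where "i \<in> J" "j \<in> J" "x \<le> y + i" "x' \<le> y' + j"
    using assms(2,3) unfolding quot_le_def by blast
  then have "x + x' \<le> y + y' + (i + j)" "i + j \<in> J"
    using add_mono vl_ideal_add[OF assms(1)] by (fastforce simp: algebra_simps)+
  then show ?thesis unfolding quot_le_def by blast
qed

lemma quot_le_inf:
  assumes "vl_ideal J" "quot_le J x y" "quot_le J x z"
  shows "quot_le J x (inf y z)"
proof -
  obtain i j where ij: "i \<in> J" "j \<in> J" "x \<le> y + i" "x \<le> z + j"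
    using assms(2,3) unfolding quot_le_def by blast
  define k where "k = sup i 0 + sup j 0"
  have "k \<in> J"
    unfolding k_def using ij vl_ideal_add vl_ideal_pos_part assms(1) by blast
  moreover have "i \<le> k" "j \<le> k"
    unfolding k_def by (simp_all add: add_increasing add_increasing2)
  then have "x \<le> y + k" "x \<le> z + k"
    using ij by (meson add_left_mono order_trans)+
  then have "x \<le> inf y z + k" by (metis diff_le_eq le_inf_iff)
  ultimately show ?thesis unfolding quot_le_def by blast
qed

lemma quot_le_iff_pos_diff:
  assumes "vl_ideal J"
  shows "quot_le J x y \<longleftrightarrow> sup (x - y) 0 \<in> J"
proof
  assume "quot_le J x y"
  then obtain j where j: "j \<in> J" "x - y \<le> j" unfolding quot_le_def by (auto simp: algebra_simps)
  then have "sup (x - y) 0 \<le> sup j 0" by (simp add: le_supI1)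
  then show "sup (x - y) 0 \<in> J"
    using vl_ideal_solid[OF assms vl_ideal_pos_part[OF assms j(1)]] by simp
next
  assume "sup (x - y) 0 \<in> J"
  moreover have "x \<le> y + sup (x - y) 0"
    using sup_ge1[of "x - y" 0] by (metis add.commute diff_le_eq)
  ultimately show "quot_le J x y" unfolding quot_le_def by blast
qed

lemma uniformly_closed_memI:
  fixes y u :: "'a::{ordered_real_vector, lattice}"
  assumes J: "vl_ideal J" "uniformly_closed J" and "0 \<le> y" "0 \<le> u"
    and multiples: "\<And>n. quot_le J (real (Suc n) *\<^sub>R y) u"
  shows "y \<in> J"
proof -
  define eps where "eps k = 1 / real (Suc k)" for k
  define xs where "xs k = sup (y - eps k *\<^sub>R u) 0" for k
  have "xs k \<in> J" for k
  proof -
    have "xs k = eps k *\<^sub>R sup (real (Suc k) *\<^sub>R y - u) 0"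
      by (simp add: xs_def eps_def scaleR_sup_distrib_nonneg scaleR_diff_right)
    then show ?thesis
      using multiples[of k] vl_ideal_scaleR[OF J(1)] by (simp add: quot_le_iff_pos_diff[OF J(1)])
  qed
  moreover have "eps \<longlonglongrightarrow> 0"
    unfolding eps_def using LIMSEQ_Suc[OF lim_inverse_n'] by simp
  moreover have "vabs (xs k - y) \<le> eps k *\<^sub>R u" for k
  proof -
    have "0 \<le> inf y (eps k *\<^sub>R u)"
      using assms by (simp add: eps_def scaleR_nonneg_nonneg)
    moreover have "xs k - y = - inf y (eps k *\<^sub>R u)"
      using diff_inf_eq_pos_diff[of y "eps k *\<^sub>R u"] unfolding xs_def by (simp add: algebra_simps)
    ultimately have "vabs (xs k - y) = inf y (eps k *\<^sub>R u)"
      unfolding vabs_def by (simp add: sup_absorb2 order.trans[of _ 0])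
    then show ?thesis by simp
  qed
  ultimately show ?thesis
    using J(2) \<open>0 \<le> u\<close> unfolding uniformly_closed_def by blast
qed

subsection \<open>Disjoint systems modulo a uniformly closed ideal\<close>

(* Its supremum in E/J is [u], and among its elements only the truncations u \<and> nx can fail
   to be disjoint modulo J from an element of M. *)
definition truncation_set :: "'a::{ordered_real_vector, lattice} set \<Rightarrow> 'a set \<Rightarrow> 'a \<Rightarrow> 'a set"
  where "truncation_set J M u =
    {inf u (real n *\<^sub>R x) | x n. x \<in> M} \<union> {v. 0 \<le> v \<and> v \<le> u \<and> (\<forall>x\<in>M. inf v x \<in> J)}"

lemma truncation_set_bounds:
  assumes "a \<in> truncation_set J M u" "0 \<le> u" "\<And>x. x \<in> M \<Longrightarrow> 0 \<le> x"
  shows "0 \<le> a" "a \<le> u"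
  using assms unfolding truncation_set_def by (auto simp: scaleR_nonneg_nonneg)

lemma inf_complement_mem_ideal:
  fixes u x c :: "'a::{ordered_real_vector, lattice}"
  assumes J: "vl_ideal J" "uniformly_closed J" and "0 \<le> u" "0 \<le> x" "c \<le> u"
    and truncations: "\<And>n. quot_le J (inf u (real n *\<^sub>R x)) c"
  shows "inf (u - c) x \<in> J"
proof (rule uniformly_closed_memI[OF J _ \<open>0 \<le> u\<close>])
  show "0 \<le> inf (u - c) x" using assms by simp
  fix n
  let ?N = "real (Suc n)"
  let ?r = "sup (u - ?N *\<^sub>R x) 0"
  define a where "a = inf u (?N *\<^sub>R x)"
  define p where "p = sup (a - c) 0"
  have p: "p \<in> J" "0 \<le> p"
    using truncations[of "Suc n"] by (simp_all add: a_def p_def quot_le_iff_pos_diff[OF J(1)])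
  have "u - c = (u - a) + (a - c)" by simp
  also have "\<dots> \<le> ?r + p"
    unfolding p_def a_def diff_inf_eq_pos_diff by (intro add_left_mono) simp
  finally have "inf (u - c) x \<le> inf x (?r + p)"
    by (metis inf_commute inf_mono order_refl)
  also have "\<dots> \<le> inf x ?r + inf x p"
    using assms p by (intro inf_add_le_add_inf) auto
  also have "\<dots> \<le> inf ?r x + p"
    by (simp add: inf_commute add_left_mono)
  finally have "?N *\<^sub>R inf (u - c) x \<le> ?N *\<^sub>R inf ?r x + ?N *\<^sub>R p"
    by (simp add: scaleR_left_mono flip: scaleR_add_right)
  also have "\<dots> \<le> u + ?N *\<^sub>R p"
    using scaleR_inf_pos_diff_le[of u x ?N] assms by (simp add: add_right_mono)
  finally show "quot_le J (?N *\<^sub>R inf (u - c) x) u"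
    unfolding quot_le_def using vl_ideal_scaleR[OF J(1) p(1)] by blast
qed

lemma quot_le_multiples_complement:
  assumes J: "vl_ideal J" and "0 \<le> u"
    and truncations: "\<And>k. quot_le J (inf (real k *\<^sub>R (u - c)) u) c"
  shows "quot_le J (real k *\<^sub>R (u - c)) u"
proof (induction k)
  case 0
  show ?case using assms quot_le_of_le by simp
next
  case (Suc k)
  let ?z = "u - c"
  have "quot_le J (real k *\<^sub>R ?z) (inf (real k *\<^sub>R ?z) u)"
    using quot_le_inf[OF J quot_le_of_le[OF J order_refl] Suc.IH] .
  then have "quot_le J (real k *\<^sub>R ?z) c"
    using quot_le_trans[OF J _ truncations] by blast
  then have "quot_le J (real k *\<^sub>R ?z + ?z) (c + ?z)"
    using quot_le_add[OF J _ quot_le_of_le[OF J order_refl]] by blast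
  then show ?case by (simp add: algebra_simps)
qed

lemma complement_mem_ideal:
  assumes J: "vl_ideal J" "uniformly_closed J" and "0 \<le> u"
    and M: "\<And>x. x \<in> M \<Longrightarrow> 0 \<le> x" and "0 \<le> c" "c \<le> u"
    and upper: "\<And>a. a \<in> truncation_set J M u \<Longrightarrow> quot_le J a c"
  shows "u - c \<in> J"
proof -
  let ?z = "u - c"
  have "inf ?z x \<in> J" if "x \<in> M" for x
    using assms M[OF that]
    by (intro inf_complement_mem_ideal upper) (auto simp: truncation_set_def that)
  then have "inf (real k *\<^sub>R ?z) x \<in> J" if "x \<in> M" for k x
    using vl_ideal_inf_scaleR[OF J(1)] M[OF that] that assms by simp
  then have "inf (inf (real k *\<^sub>R ?z) u) x \<in> J" if "x \<in> M" for k x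
    using vl_ideal_solid[OF J(1), of "inf (real k *\<^sub>R ?z) x"] M[OF that] that assms
    by (simp add: scaleR_nonneg_nonneg le_infI1)
  then have "inf (real k *\<^sub>R ?z) u \<in> truncation_set J M u" for k
    using assms by (auto simp: truncation_set_def scaleR_nonneg_nonneg)
  then have multiples: "quot_le J (real k *\<^sub>R ?z) u" for k
    using quot_le_multiples_complement[OF J(1) \<open>0 \<le> u\<close>] upper by blast
  show ?thesis
    by (rule uniformly_closed_memI[OF J _ \<open>0 \<le> u\<close> multiples]) (simp add: \<open>c \<le> u\<close>)
qed

lemma quot_sup_truncation_set:
  assumes J: "vl_ideal J" "uniformly_closed J" and "0 \<le> u"
    and M: "\<And>x. x \<in> M \<Longrightarrow> 0 \<le> x"
  shows "is_sup_wrt (quot_le J) (truncation_set J M u) u"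
  unfolding is_sup_wrt_def
proof (intro conjI allI impI ballI)
  fix a assume "a \<in> truncation_set J M u"
  then show "quot_le J a u"
    using truncation_set_bounds[OF _ \<open>0 \<le> u\<close> M] quot_le_of_le[OF J(1)] by blast
next
  fix w assume upper: "\<forall>a\<in>truncation_set J M u. quot_le J a w"
  define c where "c = inf u (sup w 0)"
  have "quot_le J a c" if "a \<in> truncation_set J M u" for a
    unfolding c_def
    using that upper truncation_set_bounds[OF that \<open>0 \<le> u\<close> M]
      quot_le_inf quot_le_trans quot_le_of_le J(1)
    by (metis sup_ge1)
  moreover have "0 \<le> c" "c \<le> u"
    unfolding c_def using \<open>0 \<le> u\<close> by simp_all
  ultimately have "u - c \<in> J"
    using complement_mem_ideal[OF J \<open>0 \<le> u\<close> M] by blast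
  moreover have "0 \<in> truncation_set J M u"
    using M unfolding truncation_set_def by (auto simp: \<open>0 \<le> u\<close> vl_ideal_zero[OF J(1)] inf_absorb1)
  then have "sup (- w) 0 \<in> J"
    using upper quot_le_iff_pos_diff[OF J(1)] by fastforce
  moreover have "c \<le> sup w 0"
    unfolding c_def by simp
  then have "u \<le> sup w 0 + (u - c)"
    by (simp add: algebra_simps)
  then have "u \<le> w + (sup (- w) 0 + (u - c))"
    unfolding pos_part_add_neg_part[of w] by (simp only: add.assoc)
  ultimately show "quot_le J u w"
    unfolding quot_le_def using vl_ideal_add[OF J(1)] by blast
qed

lemma zero_mem_truncation_set:
  assumes "vl_ideal J" "0 \<le> u" "\<And>x. x \<in> M \<Longrightarrow> 0 \<le> x"
  shows "0 \<in> truncation_set J M u"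
  using assms vl_ideal_zero[OF assms(1)] unfolding truncation_set_def by (auto simp: inf_absorb1)

lemma truncation_set_detects_at_most_one:
  assumes J: "vl_ideal J" and b: "b \<in> truncation_set J M u" and "0 \<le> u"
    and M: "\<And>x. x \<in> M \<Longrightarrow> 0 \<le> x" and disjoint: "pairwise (\<lambda>x y. inf x y = 0) M"
  shows "\<exists>v. {x \<in> M. inf b x \<notin> J} \<subseteq> {v}"
proof (cases "\<exists>v n. v \<in> M \<and> b = inf u (real n *\<^sub>R v)")
  case True
  then obtain v n where v: "v \<in> M" "b = inf u (real n *\<^sub>R v)" by blast
  have "x = v" if x: "x \<in> M" "inf b x \<notin> J" for x
  proof (rule ccontr)
    assume "x \<noteq> v"
    then have "inf (real n *\<^sub>R v) x = 0"
      using disjoint v x M by (intro inf_scaleR_eq_0) (auto simp: pairwise_def inf_commute)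
    then have "inf b x \<le> 0" unfolding v(2) by (metis inf_le2 inf_mono order_refl)
    then have "inf b x = 0"
      using \<open>0 \<le> u\<close> M[OF v(1)] M[OF x(1)] unfolding v(2)
      by (simp add: antisym scaleR_nonneg_nonneg)
    then show False using x vl_ideal_zero[OF J] by simp
  qed
  then show ?thesis by blast
next
  case False
  then have "{x \<in> M. inf b x \<notin> J} = {}"
    using b unfolding truncation_set_def by auto
  then show ?thesis by blast
qed

lemma mem_ideal_if_disjoint_from_quot_sup:
  assumes J: "vl_ideal J" and sup: "is_sup_wrt (quot_le J) B u"
    and B: "\<And>b. b \<in> B \<Longrightarrow> b \<le> u" and "0 \<le> x" "x \<le> u"
    and disjoint: "\<And>b. b \<in> B \<Longrightarrow> inf b x \<in> J"
  shows "x \<in> J"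
proof -
  have "quot_le J b (u - x)" if "b \<in> B" for b
  proof -
    have "b + x = sup b x + inf b x" by (rule vl.add_eq_inf_sup)
    also have "\<dots> \<le> u + inf b x"
      using B[OF that] assms by (simp add: add_right_mono)
    finally have "b \<le> (u - x) + inf b x" by (simp add: algebra_simps)
    then show ?thesis unfolding quot_le_def using disjoint[OF that] by blast
  qed
  then have "quot_le J u (u - x)"
    using sup unfolding is_sup_wrt_def by blast
  then obtain j where "j \<in> J" "u \<le> u - x + j"
    unfolding quot_le_def by blast
  then have "x \<le> sup j 0" by (simp add: algebra_simps le_supI1)
  then show ?thesis
    using vl_ideal_solid[OF J vl_ideal_pos_part[OF J \<open>j \<in> J\<close>] \<open>0 \<le> x\<close>] by blast
qed

lemma countable_outside_ideal:
  assumes J: "vl_ideal J" "uniformly_closed J" "quotient_countable_sup_property J"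
    and "0 \<le> u" and M: "\<And>x. x \<in> M \<Longrightarrow> 0 \<le> x \<and> x \<le> u"
    and disjoint: "pairwise (\<lambda>x y. inf x y = 0) M"
  shows "countable {x \<in> M. x \<notin> J}"
proof -
  let ?S = "truncation_set J M u"
  have M0: "\<And>x. x \<in> M \<Longrightarrow> 0 \<le> x" using M by blast
  have "?S \<noteq> {}"
    using zero_mem_truncation_set[OF J(1) \<open>0 \<le> u\<close> M0] by blast
  then obtain B where B: "B \<subseteq> ?S" "countable B" "is_sup_wrt (quot_le J) B u"
    using J(3) quot_sup_truncation_set[OF J(1,2) \<open>0 \<le> u\<close> M0]
    unfolding quotient_countable_sup_property_def countable_sup_property_wrt_def by meson
  have B_le: "b \<le> u" if "b \<in> B" for b
    using truncation_set_bounds(2)[OF _ \<open>0 \<le> u\<close> M0] B(1) that by blast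
  have cover: "{x \<in> M. x \<notin> J} \<subseteq> (\<Union>b\<in>B. {x \<in> M. inf b x \<notin> J})"
  proof
    fix x assume x: "x \<in> {x \<in> M. x \<notin> J}"
    then have "\<not> (\<forall>b\<in>B. inf b x \<in> J)"
      using mem_ideal_if_disjoint_from_quot_sup[OF J(1) B(3) B_le] M by blast
    then show "x \<in> (\<Union>b\<in>B. {x \<in> M. inf b x \<notin> J})" using x by blast
  qed
  have detected: "countable {x \<in> M. inf b x \<notin> J}" if "b \<in> B" for b
  proof -
    have "b \<in> ?S" using that B(1) by blast
    then obtain v where "{x \<in> M. inf b x \<notin> J} \<subseteq> {v}"
      using truncation_set_detects_at_most_one[of J b M u] J(1) \<open>0 \<le> u\<close> M0 disjoint by blast
    then show ?thesis by (rule countable_subset) simp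
  qed
  show ?thesis
    by (rule countable_subset[OF cover countable_UN[OF B(2) detected]])
qed

lemma countable_disjoint_system:
  fixes J :: "nat \<Rightarrow> 'a::{ordered_real_vector, lattice} set" and M :: "'a set"
  assumes "\<And>n. vl_ideal (J n)" "\<And>n. uniformly_closed (J n)"
    "\<And>n. quotient_countable_sup_property (J n)" and trivial: "(\<Inter>n. J n) = {0}"
    and "0 \<le> u" and M: "\<And>x. x \<in> M \<Longrightarrow> 0 < x \<and> x \<le> u"
    and disjoint: "pairwise (\<lambda>x y. inf x y = 0) M"
  shows "countable M"
proof -
  have cover: "M \<subseteq> (\<Union>n. {x \<in> M. x \<notin> J n})"
  proof
    fix x assume "x \<in> M"
    then have "x \<notin> (\<Inter>n. J n)" using M[of x] trivial by auto
    then show "x \<in> (\<Union>n. {x \<in> M. x \<notin> J n})" using \<open>x \<in> M\<close> by blast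
  qed
  have "countable {x \<in> M. x \<notin> J n}" for n
  proof (rule countable_outside_ideal)
    show "\<And>x. x \<in> M \<Longrightarrow> 0 \<le> x \<and> x \<le> u" using M by (simp add: less_imp_le)
  qed (use assms in blast)+
  then show ?thesis
    by (intro countable_subset[OF cover] countable_UN[OF countableI_type])
qed

subsection \<open>Disjoint systems and the countable sup property\<close>

lemma exists_maximal_disjoint_system:
  fixes P :: "'a::{ordered_real_vector, lattice} set"
  assumes P: "\<And>p. p \<in> P \<Longrightarrow> 0 \<le> p"
  obtains M where "M \<subseteq> {x. 0 < x \<and> (\<exists>p\<in>P. x \<le> p)}" "pairwise (\<lambda>x y. inf x y = 0) M"
    and "\<And>w p. 0 \<le> w \<Longrightarrow> \<forall>x\<in>M. inf w x = 0 \<Longrightarrow> p \<in> P \<Longrightarrow> inf w p = 0"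
proof -
  define X where "X = {x. 0 < x \<and> (\<exists>p\<in>P. x \<le> p)}"
  define F where "F = {Y. Y \<subseteq> X \<and> pairwise (\<lambda>x y. inf x y = 0) Y}"
  have "\<Union>C \<in> F" if "C \<in> chains F" for C
    using chainsD2[OF that] that
    by (auto simp: F_def chains_def intro!: pairwise_chain_Union)
  then obtain M where M: "M \<in> F" and max: "\<And>Y. Y \<in> F \<Longrightarrow> M \<subseteq> Y \<Longrightarrow> Y = M"
    using Zorn_Lemma[of F] by blast
  have M_pos: "0 \<le> x" if "x \<in> M" for x
    using M that by (auto simp: F_def X_def less_imp_le)
  have "inf w p = 0" if w: "0 \<le> w" "\<forall>x\<in>M. inf w x = 0" and "p \<in> P" for w p
  proof (rule ccontr)
    let ?y = "inf w p"
    assume "?y \<noteq> 0"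
    moreover have "0 \<le> ?y" using w P[OF \<open>p \<in> P\<close>] by simp
    ultimately have "0 < ?y" by (simp add: order_le_neq_trans)
    then have "?y \<in> X" unfolding X_def using \<open>p \<in> P\<close> inf_le2 by blast
    have "?y \<notin> M"
      using w(2) \<open>?y \<noteq> 0\<close> by (auto simp: inf_absorb2)
    have "inf ?y x = 0" if "x \<in> M" for x
    proof -
      have "inf ?y x \<le> inf w x" by (rule inf_mono) simp_all
      then show ?thesis using w that M_pos[OF that] \<open>0 \<le> ?y\<close> by (simp add: antisym)
    qed
    then have "insert ?y M \<in> F"
      using M \<open>?y \<in> X\<close> by (auto simp: F_def pairwise_insert inf_commute)
    then show False using max \<open>?y \<notin> M\<close> by blast
  qed
  then show thesis using that M by (auto simp: F_def X_def)
qed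

lemma exists_countable_disjointness_base:
  fixes f :: "'b \<Rightarrow> 'a::{ordered_real_vector, lattice}"
  assumes countable: "\<And>M. (\<And>x. x \<in> M \<Longrightarrow> 0 < x \<and> x \<le> u) \<Longrightarrow>
      pairwise (\<lambda>x y. inf x y = 0) M \<Longrightarrow> countable M"
    and f: "\<And>a. a \<in> A \<Longrightarrow> 0 \<le> f a \<and> f a \<le> u"
  obtains C where "C \<subseteq> A" "countable C"
    and "\<And>w a. 0 \<le> w \<Longrightarrow> \<forall>c\<in>C. inf w (f c) = 0 \<Longrightarrow> a \<in> A \<Longrightarrow> inf w (f a) = 0"
proof -
  obtain M where M: "M \<subseteq> {x. 0 < x \<and> (\<exists>p\<in>f ` A. x \<le> p)}"
    and disjoint: "pairwise (\<lambda>x y. inf x y = 0) M"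
    and maximal: "\<And>w p. 0 \<le> w \<Longrightarrow> \<forall>x\<in>M. inf w x = 0 \<Longrightarrow> p \<in> f ` A \<Longrightarrow> inf w p = 0"
    using exists_maximal_disjoint_system[of "f ` A"] f by blast
  have "\<forall>x\<in>M. \<exists>a. a \<in> A \<and> x \<le> f a" using M by blast
  from bchoice[OF this] obtain g where g: "\<forall>x\<in>M. g x \<in> A \<and> x \<le> f (g x)" by blast
  have "countable M"
  proof (rule countable[OF _ disjoint])
    fix x assume "x \<in> M"
    then show "0 < x \<and> x \<le> u"
      using M g f[of "g x"] by (auto intro: order.trans)
  qed
  show thesis
  proof (rule that[of "g ` M"])
    show "g ` M \<subseteq> A" "countable (g ` M)"
      using g \<open>countable M\<close> by auto
    fix w a assume w: "0 \<le> w" "\<forall>c\<in>g ` M. inf w (f c) = 0" and "a \<in> A"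
    have "inf w x = 0" if "x \<in> M" for x
    proof -
      have "inf w x \<le> inf w (f (g x))" using g that by (simp add: le_infI2)
      then show ?thesis using w that M by (simp add: antisym less_imp_le subset_iff)
    qed
    then show "inf w (f a) = 0" using maximal w \<open>a \<in> A\<close> by blast
  qed
qed

lemma eq_0_if_disjoint_from_gaps:
  fixes A :: "'a::{ordered_real_vector, lattice} set"
  assumes sup: "is_sup_wrt (\<le>) A s" and "0 < r" "0 \<le> t" "t \<le> d"
    and disjoint: "\<And>a. a \<in> A \<Longrightarrow> inf t (sup (d - r *\<^sub>R (s - a)) 0) = 0"
  shows "t = 0"
proof -
  have "a \<le> s - (1 / r) *\<^sub>R t" if a: "a \<in> A" for a
  proof -
    let ?p = "sup (d - r *\<^sub>R (s - a)) 0"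
    have "0 \<le> r *\<^sub>R (s - a)"
      using sup a \<open>0 < r\<close> unfolding is_sup_wrt_def by (simp add: scaleR_nonneg_nonneg)
    then have "?p \<le> d" using assms by simp
    have "t + (d - r *\<^sub>R (s - a)) \<le> t + ?p" by (simp add: add_left_mono)
    also have "\<dots> = sup t ?p"
      using vl.add_eq_inf_sup[of t ?p] disjoint[OF a] by simp
    also have "\<dots> \<le> d"
      using \<open>?p \<le> d\<close> \<open>t \<le> d\<close> by simp
    finally have "t + (d - r *\<^sub>R (s - a)) \<le> d" .
    then have "r *\<^sub>R ((1 / r) *\<^sub>R t) \<le> r *\<^sub>R (s - a)"
      using \<open>0 < r\<close> by (simp add: algebra_simps)
    then have "(1 / r) *\<^sub>R t \<le> s - a"
      using scaleR_le_cancel_left_pos[OF \<open>0 < r\<close>] by blast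
    then show ?thesis by (simp add: algebra_simps)
  qed
  then have "s \<le> s - (1 / r) *\<^sub>R t"
    using sup unfolding is_sup_wrt_def by blast
  then have "t \<le> 0"
    using \<open>0 < r\<close> by (simp add: scaleR_le_0_iff)
  then show ?thesis using \<open>0 \<le> t\<close> by simp
qed

lemma scaleR_gap_le:
  fixes A C :: "'a::{ordered_real_vector, lattice} set"
  assumes sup: "is_sup_wrt (\<le>) A s" and "0 < r" "0 \<le> z" "z \<le> d"
    and C: "\<And>c. c \<in> C \<Longrightarrow> z \<le> s - c"
    and base: "\<And>w a. 0 \<le> w \<Longrightarrow> \<forall>c\<in>C. inf w (sup (d - r *\<^sub>R (s - c)) 0) = 0 \<Longrightarrow> a \<in> A \<Longrightarrow>
      inf w (sup (d - r *\<^sub>R (s - a)) 0) = 0"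
  shows "r *\<^sub>R z \<le> d"
proof -
  define w where "w = sup (r *\<^sub>R z - d) 0"
  have "0 \<le> w" "0 \<le> d" using assms by (simp_all add: w_def)
  have "inf w (sup (d - r *\<^sub>R (s - c)) 0) = 0" if "c \<in> C" for c
  proof -
    have "r *\<^sub>R z \<le> r *\<^sub>R (s - c)"
      using C[OF that] \<open>0 < r\<close> by (simp add: scaleR_left_mono)
    then have "inf w (sup (d - r *\<^sub>R (s - c)) 0) \<le> inf w (sup (d - r *\<^sub>R z) 0)"
      by (intro inf_mono sup_mono diff_left_mono) simp_all
    also have "\<dots> = 0"
      using inf_pos_part_neg_part[of "r *\<^sub>R z - d"] by (simp add: w_def)
    finally show ?thesis by (simp add: antisym w_def)
  qed
  then have w_disjoint: "inf w (sup (d - r *\<^sub>R (s - a)) 0) = 0" if "a \<in> A" for a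
    using base[OF \<open>0 \<le> w\<close> _ that] by blast
  have "inf (inf w d) (sup (d - r *\<^sub>R (s - a)) 0) = 0" if "a \<in> A" for a
  proof -
    have "inf (inf w d) (sup (d - r *\<^sub>R (s - a)) 0) \<le> inf w (sup (d - r *\<^sub>R (s - a)) 0)"
      by (rule inf_mono) simp_all
    moreover have "0 \<le> inf (inf w d) (sup (d - r *\<^sub>R (s - a)) 0)"
      using \<open>0 \<le> w\<close> \<open>0 \<le> d\<close> by simp
    ultimately show ?thesis using w_disjoint[OF that] by (metis antisym)
  qed
  then have "inf w d = 0"
    by (rule eq_0_if_disjoint_from_gaps[OF sup \<open>0 < r\<close>, rotated 2]) (use \<open>0 \<le> w\<close> \<open>0 \<le> d\<close> in simp_all)
  then have "inf (r *\<^sub>R d) w = 0"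
    using inf_scaleR_eq_0[of d w r] assms by (simp add: w_def inf_commute)
  moreover have "r *\<^sub>R z - d \<le> r *\<^sub>R d"
    using \<open>z \<le> d\<close> \<open>0 < r\<close> \<open>0 \<le> d\<close> by (simp add: scaleR_left_mono diff_le_eq add_increasing2)
  then have "w \<le> r *\<^sub>R d"
    using \<open>0 < r\<close> \<open>0 \<le> d\<close> by (simp add: w_def scaleR_nonneg_nonneg)
  ultimately have "w = 0" by (simp add: inf_absorb2)
  then show ?thesis unfolding w_def by (metis sup.cobounded1 diff_le_0_iff_le)
qed

lemma countable_sup_property_if_countable_disjoint_systems:
  assumes archimedean: "archimedean_vl TYPE('a::{ordered_real_vector, lattice})"
    and countable: "\<And>(M::'a set) u. 0 \<le> u \<Longrightarrow> (\<And>x. x \<in> M \<Longrightarrow> 0 < x \<and> x \<le> u) \<Longrightarrow>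
      pairwise (\<lambda>x y. inf x y = 0) M \<Longrightarrow> countable M"
  shows "countable_sup_property TYPE('a)"
  unfolding countable_sup_property_def countable_sup_property_wrt_def
proof (intro allI impI)
  fix A :: "'a set" and s
  assume "A \<noteq> {} \<and> is_sup_wrt (\<le>) A s"
  then obtain a0 where a0: "a0 \<in> A" and sup: "is_sup_wrt (\<le>) A s" by blast
  have le_s: "a \<le> s" if "a \<in> A" for a using sup that unfolding is_sup_wrt_def by blast
  define d where "d = s - a0"
  define gap where "gap m a = sup (d - real (Suc m) *\<^sub>R (s - a)) 0" for m a
  have "0 \<le> d" using le_s[OF a0] by (simp add: d_def)
  have gap_bounds: "0 \<le> gap m a \<and> gap m a \<le> d" if "a \<in> A" for m a
  proof -
    have "0 \<le> real (Suc m) *\<^sub>R (s - a)"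
      using le_s[OF that] by (simp add: scaleR_nonneg_nonneg)
    then show ?thesis using \<open>0 \<le> d\<close> by (simp add: gap_def)
  qed
  have "\<forall>m. \<exists>C. C \<subseteq> A \<and> countable C \<and>
      (\<forall>w a. 0 \<le> w \<longrightarrow> (\<forall>c\<in>C. inf w (gap m c) = 0) \<longrightarrow> a \<in> A \<longrightarrow> inf w (gap m a) = 0)"
  proof
    fix m
    obtain C where "C \<subseteq> A" "countable C"
      "\<And>w a. 0 \<le> w \<Longrightarrow> \<forall>c\<in>C. inf w (gap m c) = 0 \<Longrightarrow> a \<in> A \<Longrightarrow> inf w (gap m a) = 0"
      using exists_countable_disjointness_base[of d A "gap m", OF countable[OF \<open>0 \<le> d\<close>] gap_bounds]
      by blast
    then show "\<exists>C. C \<subseteq> A \<and> countable C \<and>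
      (\<forall>w a. 0 \<le> w \<longrightarrow> (\<forall>c\<in>C. inf w (gap m c) = 0) \<longrightarrow> a \<in> A \<longrightarrow> inf w (gap m a) = 0)"
      by blast
  qed
  from choice[OF this] obtain C where C: "\<forall>m. C m \<subseteq> A \<and> countable (C m) \<and>
      (\<forall>w a. 0 \<le> w \<longrightarrow> (\<forall>c\<in>C m. inf w (gap m c) = 0) \<longrightarrow> a \<in> A \<longrightarrow> inf w (gap m a) = 0)"
    by (rule exE)
  define B where "B = insert a0 (\<Union>m. C m)"
  have "B \<subseteq> A" "countable B" using a0 C by (auto simp: B_def)
  moreover have "is_sup_wrt (\<le>) B s"
    unfolding is_sup_wrt_def
  proof (intro conjI ballI allI impI)
    fix b assume "b \<in> B" then show "b \<le> s" using \<open>B \<subseteq> A\<close> le_s by blast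
  next
    fix w assume w: "\<forall>b\<in>B. b \<le> w"
    define z where "z = sup (s - w) 0"
    have "0 \<le> z" by (simp add: z_def)
    have z_le: "z \<le> s - b" if "b \<in> B" for b
    proof -
      have "b \<le> w" "b \<le> s" using w that \<open>B \<subseteq> A\<close> le_s by blast+
      then show ?thesis unfolding z_def by (simp add: diff_left_mono)
    qed
    have "real (Suc m) *\<^sub>R z \<le> d" for m
    proof (rule scaleR_gap_le[OF sup _ \<open>0 \<le> z\<close>])
      show "z \<le> d" using z_le[of a0] by (simp add: B_def d_def)
      show "z \<le> s - c" if "c \<in> C m" for c using z_le that by (auto simp: B_def)
      show "inf v (sup (d - real (Suc m) *\<^sub>R (s - a)) 0) = 0"
        if "0 \<le> v" "\<forall>c\<in>C m. inf v (sup (d - real (Suc m) *\<^sub>R (s - c)) 0) = 0" "a \<in> A" for v a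
        using C that unfolding gap_def by blast
    qed simp
    then have "of_nat n *\<^sub>R z \<le> d" for n
      using \<open>0 \<le> d\<close> by (cases n) simp_all
    then have "z = 0"
      using archimedean \<open>0 \<le> z\<close> unfolding archimedean_vl_def by blast
    then show "s \<le> w" unfolding z_def by (metis sup.cobounded1 diff_le_0_iff_le)
  qed
  ultimately show "\<exists>B. B \<subseteq> A \<and> countable B \<and> is_sup_wrt (\<le>) B s" by blast
qed

theorem proposition4p15:
  fixes J :: "nat \<Rightarrow> 'a::{ordered_real_vector, lattice} set"
  assumes "archimedean_vl TYPE('a)"
    and "\<And>n. vl_ideal (J n)"
    and "\<And>n. uniformly_closed (J n)"
    and "\<And>n. quotient_countable_sup_property (J n)"
    and "(\<Inter>n. J n) = {0}"
  shows "countable_sup_property TYPE('a)"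
  using assms(1) countable_disjoint_system[OF assms(2-5)]
  by (rule countable_sup_property_if_countable_disjoint_systems)

end
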